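(* Let $\Gamma$ be a second countable locally compact abelian group, $n\ge2$, and $\omega\in\Gamma^n$ such that $K\omega_1=0$ for some positive integer $K$ and $-\omega_j\notin\Omega_{\{1\}}$ for every $j\ne1$. Let $\Omega=\{\omega_\mu:\mu\text{ a word}\}$. Then for every $\gamma\in\Gamma$ there is a neighborhood $U$ of $\gamma$ with $(U\setminus\{\gamma\})\cap\Omega=\emptyset$.
   Context: Words are finite sequences $\mu=(i_1,\ldots,i_k)$ in $\{1,\ldots,n\}$ including the empty word, and $\omega_\mu=\sum_j\omega_{i_j}$, so $\Omega$ is the (algebraic) semigroup generated by $\omega_1,\ldots,\omega_n$ together with $0$. $\Omega_{\{1\}}$ is the closed subsemigroup of $\Gamma$ generated by $\omega_1,\ldots,\omega_n$ and $-\omega_1$. *)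

theory Defs
  imports "HOL-Analysis.Analysis"
begin

definition word_sum :: "(nat \<Rightarrow> 'a::comm_monoid_add) \<Rightarrow> nat list \<Rightarrow> 'a" where
  "word_sum \<omega> \<mu> = sum_list (map \<omega> \<mu>)"

definition Omega_set :: "nat \<Rightarrow> (nat \<Rightarrow> 'a::comm_monoid_add) \<Rightarrow> 'a set" where
  "Omega_set n \<omega> = {word_sum \<omega> \<mu> | \<mu>. \<mu> \<in> lists {1..n}}"

definition closed_subsemigroup_gen :: "'a::{topological_space,plus} set \<Rightarrow> 'a set" where
  "closed_subsemigroup_gen G =
     \<Inter>{S. closed S \<and> G \<subseteq> S \<and> (\<forall>x\<in>S. \<forall>y\<in>S. x + y \<in> S)}"

definition Omega_1 :: "nat \<Rightarrow> (nat \<Rightarrow> 'a::{topological_space,ab_group_add}) \<Rightarrow> 'a set" where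
  "Omega_1 n \<omega> = closed_subsemigroup_gen (\<omega> ` {1..n} \<union> {- \<omega> 1})"

end

theory Submission
  imports Defs
begin

text \<open>The closed semigroup S = Omega_{1} contains omega_1 and -omega_1, hence 0. Since S is
  closed and -omega_j \<notin> S for j \<noteq> 1, every point has a neighbourhood U with
  x - y - omega_j \<notin> S for all x, y \<in> U and j \<noteq> 1. Compare two words with sums in U through
  their multisets of letters other than 1: if one were contained in the other with a letter j left
  over, the difference of the sums minus omega_j would be a sum of elements of S, as the letters 1
  of either word are absorbed by omega_1 and -omega_1. So these multisets form an antichain, which
  is finite by Dickson's lemma, and since omega_1 has finite order, U meets Omega in finitely many
  points.\<close>

definition scaleN :: "nat \<Rightarrow> 'a::comm_monoid_add \<Rightarrow> 'a" where
  "scaleN c x = (\<Sum>i<c. x)"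

lemma scaleN_zero_left [simp]: "scaleN 0 x = 0"
  by (simp add: scaleN_def)

lemma scaleN_Suc: "scaleN (Suc c) x = x + scaleN c x"
  by (simp add: scaleN_def add.commute)

lemma scaleN_zero_right [simp]: "scaleN c 0 = 0"
  by (simp add: scaleN_def)

lemma scaleN_add: "scaleN (a + b) x = scaleN a x + scaleN b x"
  by (induction a) (simp_all add: scaleN_Suc add.assoc)

lemma scaleN_mult: "scaleN (a * b) x = scaleN a (scaleN b x)"
  by (induction a) (simp_all add: scaleN_Suc scaleN_add)

lemma scaleN_minus: "scaleN c (- x) = - scaleN c (x::'a::ab_group_add)"
  by (simp add: scaleN_def sum_negf)

lemma scaleN_mod:
  assumes "scaleN K x = 0"
  shows "scaleN c x = scaleN (c mod K) x"
proof -
  have "scaleN c x = scaleN (c div K * K + c mod K) x"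
    by simp
  also have "\<dots> = scaleN (c mod K) x"
    by (simp only: scaleN_add scaleN_mult assms scaleN_zero_right add_0)
  finally show ?thesis .
qed

lemma sum_mset_replicate_mset_eq_scaleN: "sum_mset (replicate_mset c x) = scaleN c x"
  by (induction c) (simp_all add: scaleN_Suc)

lemma scaleN_mem:
  assumes "0 \<in> S" "\<And>x y. x \<in> S \<Longrightarrow> y \<in> S \<Longrightarrow> x + y \<in> S" "x \<in> S"
  shows "scaleN c x \<in> S"
  by (induction c) (simp_all add: scaleN_Suc assms)

lemma sum_mset_mem:
  assumes "0 \<in> S" "\<And>x y. x \<in> S \<Longrightarrow> y \<in> S \<Longrightarrow> x + y \<in> S" "set_mset M \<subseteq> S"
  shows "sum_mset M \<in> S"
  using assms(3) by (induction M) (simp_all add: assms(1,2))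

lemma subset_mset_if_filter_neq_subset:
  assumes "count M x \<le> count N x" "{#y \<in># M. y \<noteq> x#} \<subseteq># {#y \<in># N. y \<noteq> x#}"
  shows "M \<subseteq># N"
  unfolding subseteq_mset_def
proof
  fix y
  show "count M y \<le> count N y"
  proof (cases "y = x")
    case False
    have "count {#y \<in># M. y \<noteq> x#} y \<le> count {#y \<in># N. y \<noteq> x#} y"
      using assms(2) by (rule mset_subset_eq_count)
    then show ?thesis
      using False by simp
  qed (use assms(1) in simp)
qed

lemma subset_mset_antichain_fibre:
  fixes A :: "'a multiset set" and x :: 'a and c :: nat
  assumes antichain: "\<And>M N. M \<in> A \<Longrightarrow> N \<in> A \<Longrightarrow> M \<subseteq># N \<Longrightarrow> M = N"
  defines "F \<equiv> {N \<in> A. count N x = c}" and "strip \<equiv> filter_mset (\<lambda>y. y \<noteq> x)"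
  shows "inj_on strip F"
    and "\<And>M N. M \<in> strip ` F \<Longrightarrow> N \<in> strip ` F \<Longrightarrow> M \<subseteq># N \<Longrightarrow> M = N"
proof -
  have reflect: "M = N" if "M \<in> F" "N \<in> F" "strip M \<subseteq># strip N" for M N
  proof (rule antichain)
    show "M \<subseteq># N"
      by (rule subset_mset_if_filter_neq_subset[where x = x])
        (use that in \<open>simp_all add: F_def strip_def\<close>)
  qed (use that in \<open>simp_all add: F_def\<close>)
  then show "inj_on strip F"
    by (rule_tac inj_onI) simp
  show "M = N" if "M \<in> strip ` F" "N \<in> strip ` F" "M \<subseteq># N" for M N
  proof -
    from that(1,2) obtain M' N' where "M' \<in> F" "N' \<in> F" and M: "M = strip M'" and N: "N = strip N'"
      by blast
    then have "M' = N'"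
      using \<open>M \<subseteq># N\<close> by (intro reflect) simp_all
    then show ?thesis
      unfolding M N by simp
  qed
qed

lemma not_subset_mset_obtains_count_less:
  assumes "\<not> M \<subseteq># N"
  obtains x where "x \<in># M" "count N x < count M x"
  using assms unfolding subseteq_mset_def by (metis count_inI not_le not_less_zero)

lemma finite_subset_mset_antichain:
  assumes "finite X" "\<And>M. M \<in> A \<Longrightarrow> set_mset M \<subseteq> X"
    and "\<And>M N. M \<in> A \<Longrightarrow> N \<in> A \<Longrightarrow> M \<subseteq># N \<Longrightarrow> M = N"
  shows "finite A"
  using assms
proof (induction X arbitrary: A rule: finite_psubset_induct)
  case (psubset X A)
  note support = psubset.prems(1) and antichain = psubset.prems(2)
  show ?case
  proof (cases "A = {}")
    case False
    then obtain M0 where M0: "M0 \<in> A" by blast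
    let ?fibre = "\<lambda>x c. {N \<in> A. count N x = c}" and ?drop = "\<lambda>x. filter_mset (\<lambda>y. y \<noteq> x)"
    have "finite (?fibre x c)" if "x \<in> X" for x c
    proof (rule finite_imageD)
      show "finite (?drop x ` ?fibre x c)"
      proof (rule psubset.IH)
        show "X - {x} \<subset> X"
          using that by blast
        show "set_mset M \<subseteq> X - {x}" if "M \<in> ?drop x ` ?fibre x c" for M
          using that support by fastforce
      qed (rule subset_mset_antichain_fibre(2)[OF antichain])
      show "inj_on (?drop x) (?fibre x c)"
        by (rule subset_mset_antichain_fibre(1)[OF antichain])
    qed
    moreover have "A \<subseteq> insert M0 (\<Union>x\<in>X. \<Union>c<count M0 x. ?fibre x c)"
    proof
      fix N assume "N \<in> A"
      show "N \<in> insert M0 (\<Union>x\<in>X. \<Union>c<count M0 x. ?fibre x c)"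
      proof (cases "M0 \<subseteq># N")
        case True
        then show ?thesis using antichain[OF M0 \<open>N \<in> A\<close>] by simp
      next
        case False
        then obtain x where "x \<in># M0" "count N x < count M0 x"
          by (rule not_subset_mset_obtains_count_less)
        then show ?thesis using support[OF M0] \<open>N \<in> A\<close> by blast
      qed
    qed
    ultimately show ?thesis
      using psubset.hyps by (simp add: finite_subset)
  qed simp
qed

definition other_letters :: "'b \<Rightarrow> 'b list \<Rightarrow> 'b multiset" where
  "other_letters a \<mu> = {#i \<in># mset \<mu>. i \<noteq> a#}"

lemma set_mset_other_letters [simp]: "set_mset (other_letters a \<mu>) = set \<mu> - {a}"
  by (auto simp: other_letters_def)

lemma word_sum_split_letter:
  "word_sum \<omega> \<mu> = scaleN (count_list \<mu> a) (\<omega> a) + sum_mset (image_mset \<omega> (other_letters a \<mu>))"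
proof -
  have "mset \<mu> = {#i \<in># mset \<mu>. i = a#} + other_letters a \<mu>"
    unfolding other_letters_def by (rule multiset_partition)
  also have "{#i \<in># mset \<mu>. i = a#} = replicate_mset (count_list \<mu> a) a"
    by (simp add: filter_eq_replicate_mset count_mset)
  finally have "image_mset \<omega> (mset \<mu>) = replicate_mset (count_list \<mu> a) (\<omega> a) + image_mset \<omega> (other_letters a \<mu>)"
    by simp
  then show ?thesis
    by (simp add: word_sum_def sum_mset_sum_list[symmetric] sum_mset_replicate_mset_eq_scaleN)
qed

lemma word_sum_diff_mem:
  fixes \<omega> :: "nat \<Rightarrow> 'a::ab_group_add"
  assumes "0 \<in> S" "\<And>x y. x \<in> S \<Longrightarrow> y \<in> S \<Longrightarrow> x + y \<in> S"
    and "\<omega> ` set \<nu> \<subseteq> S" "\<omega> a \<in> S" "- \<omega> a \<in> S"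
    and "other_letters a \<mu> \<subseteq># other_letters a \<nu>"
    and "j \<in># other_letters a \<nu> - other_letters a \<mu>"
  shows "word_sum \<omega> \<nu> - word_sum \<omega> \<mu> - \<omega> j \<in> S"
proof -
  define D where "D = other_letters a \<nu> - other_letters a \<mu> - {#j#}"
  have "other_letters a \<nu> - other_letters a \<mu> = add_mset j D"
    using assms(7) unfolding D_def by (rule insert_DiffM[symmetric])
  then have "other_letters a \<nu> = other_letters a \<mu> + add_mset j D"
    using assms(6) by (metis subset_mset.add_diff_inverse)
  then have diff: "word_sum \<omega> \<nu> - word_sum \<omega> \<mu> - \<omega> j
      = scaleN (count_list \<nu> a) (\<omega> a) + scaleN (count_list \<mu> a) (- \<omega> a) + sum_mset (image_mset \<omega> D)"
    unfolding word_sum_split_letter[of _ _ a] scaleN_minus by simp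
  have "D \<subseteq># mset \<nu>"
    unfolding D_def other_letters_def
    by (meson diff_subset_eq_self multiset_filter_subset subset_mset.order_trans)
  then have "set_mset (image_mset \<omega> D) \<subseteq> S"
    using assms(3) set_mset_mono by fastforce
  then show ?thesis
    unfolding diff using assms(1,2,4,5) by (metis scaleN_mem sum_mset_mem)
qed

lemma other_letters_antichain:
  fixes \<omega> :: "nat \<Rightarrow> 'a::ab_group_add"
  assumes "0 \<in> S" "\<And>x y. x \<in> S \<Longrightarrow> y \<in> S \<Longrightarrow> x + y \<in> S"
    and "\<And>i. i \<in> {1..n} \<Longrightarrow> \<omega> i \<in> S" "\<omega> 1 \<in> S" "- \<omega> 1 \<in> S"
    and separated: "\<And>x y j. x \<in> U \<Longrightarrow> y \<in> U \<Longrightarrow> j \<in> {1..n} - {1} \<Longrightarrow> x - y - \<omega> j \<notin> S"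
    and "\<mu> \<in> lists {1..n}" "\<nu> \<in> lists {1..n}" "word_sum \<omega> \<mu> \<in> U" "word_sum \<omega> \<nu> \<in> U"
    and sub: "other_letters 1 \<mu> \<subseteq># other_letters 1 \<nu>"
  shows "other_letters 1 \<mu> = other_letters 1 \<nu>"
proof (rule ccontr)
  assume "other_letters 1 \<mu> \<noteq> other_letters 1 \<nu>"
  then obtain j where j: "j \<in># other_letters 1 \<nu> - other_letters 1 \<mu>"
    using sub by (metis multiset_nonemptyE subset_mset.diff_add add_0)
  then have "j \<in> {1..n} - {1}"
    using \<open>\<nu> \<in> lists {1..n}\<close> by (auto dest: in_diffD)
  have \<nu>_in_S: "\<omega> ` set \<nu> \<subseteq> S"
    using assms(3) \<open>\<nu> \<in> lists {1..n}\<close> by auto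
  have "word_sum \<omega> \<nu> - word_sum \<omega> \<mu> - \<omega> j \<in> S"
    by (rule word_sum_diff_mem[OF assms(1,2) \<nu>_in_S assms(4,5) sub j])
  then show False
    using separated assms(9,10) \<open>j \<in> {1..n} - {1}\<close> by blast
qed

lemma finite_Omega_set_inter:
  fixes \<omega> :: "nat \<Rightarrow> 'a::ab_group_add"
  assumes "0 \<in> S" "\<And>x y. x \<in> S \<Longrightarrow> y \<in> S \<Longrightarrow> x + y \<in> S"
    and "\<And>i. i \<in> {1..n} \<Longrightarrow> \<omega> i \<in> S" "\<omega> 1 \<in> S" "- \<omega> 1 \<in> S"
    and "\<And>x y j. x \<in> U \<Longrightarrow> y \<in> U \<Longrightarrow> j \<in> {1..n} - {1} \<Longrightarrow> x - y - \<omega> j \<notin> S"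
    and "K > 0" "scaleN K (\<omega> 1) = 0"
  shows "finite (U \<inter> Omega_set n \<omega>)"
proof -
  define T where "T = {\<mu> \<in> lists {1..n}. word_sum \<omega> \<mu> \<in> U}"
  have letters_finite: "finite (other_letters 1 ` T)"
  proof (rule finite_subset_mset_antichain)
    show "set_mset M \<subseteq> {1..n} - {1}" if "M \<in> other_letters 1 ` T" for M
      using that by (auto simp: T_def)
    show "M = N" if "M \<in> other_letters 1 ` T" "N \<in> other_letters 1 ` T" "M \<subseteq># N" for M N
      using that other_letters_antichain[where S = S and n = n and \<omega> = \<omega> and U = U, OF assms(1-6)] unfolding T_def by blast
  qed simp
  have "U \<inter> Omega_set n \<omega> \<subseteq>
      (\<lambda>(r, M). scaleN r (\<omega> 1) + sum_mset (image_mset \<omega> M)) ` ({..<K} \<times> other_letters 1 ` T)"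
  proof
    fix x assume "x \<in> U \<inter> Omega_set n \<omega>"
    then obtain \<mu> where "\<mu> \<in> T" "x = word_sum \<omega> \<mu>"
      unfolding Omega_set_def T_def by auto
    then have "x = scaleN (count_list \<mu> 1 mod K) (\<omega> 1) + sum_mset (image_mset \<omega> (other_letters 1 \<mu>))"
      by (simp only: word_sum_split_letter scaleN_mod[OF assms(8), symmetric])
    moreover have "(count_list \<mu> 1 mod K, other_letters 1 \<mu>) \<in> {..<K} \<times> other_letters 1 ` T"
      using \<open>\<mu> \<in> T\<close> \<open>K > 0\<close> by simp
    ultimately show "x \<in> (\<lambda>(r, M). scaleN r (\<omega> 1) + sum_mset (image_mset \<omega> M)) ` ({..<K} \<times> other_letters 1 ` T)"
      by (metis (no_types, lifting) case_prod_conv rev_image_eqI)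
  qed
  moreover have "finite ({..<K} \<times> other_letters 1 ` T)"
    using letters_finite by (intro finite_cartesian_product finite_lessThan)
  ultimately show ?thesis
    by (rule finite_subset[OF _ finite_imageI])
qed

lemma closed_Omega_1: "closed (Omega_1 n \<omega>)"
  unfolding Omega_1_def closed_subsemigroup_gen_def by (rule closed_Inter) auto

lemma Omega_1_add: "x \<in> Omega_1 n \<omega> \<Longrightarrow> y \<in> Omega_1 n \<omega> \<Longrightarrow> x + y \<in> Omega_1 n \<omega>"
  unfolding Omega_1_def closed_subsemigroup_gen_def by auto

lemma Omega_1_generator: "i \<in> {1..n} \<Longrightarrow> \<omega> i \<in> Omega_1 n \<omega>"
  unfolding Omega_1_def closed_subsemigroup_gen_def by auto

lemma uminus_first_in_Omega_1: "- \<omega> 1 \<in> Omega_1 n \<omega>"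
  unfolding Omega_1_def closed_subsemigroup_gen_def by auto

lemma zero_in_Omega_1:
  assumes "1 \<le> n"
  shows "0 \<in> Omega_1 n \<omega>"
  using Omega_1_add[OF Omega_1_generator uminus_first_in_Omega_1, of 1] assms by simp

lemma open_nhd_differences_subset:
  fixes V :: "'a::topological_group_add set"
  assumes "open V" "0 \<in> V"
  obtains U where "open U" "\<gamma> \<in> U" "\<And>x y. x \<in> U \<Longrightarrow> y \<in> U \<Longrightarrow> x - y \<in> V"
proof -
  have "((\<lambda>p. fst p - snd p) \<longlongrightarrow> fst (\<gamma>, \<gamma>) - snd (\<gamma>, \<gamma>)) (nhds (\<gamma>, \<gamma>))"
    by (intro tendsto_intros filterlim_ident)
  from topological_tendstoD[OF this assms(1)]
  have "eventually (\<lambda>p. fst p - snd p \<in> V) (nhds (\<gamma>, \<gamma>))"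
    using assms(2) by simp
  then obtain Q where Q: "eventually Q (nhds \<gamma>)" and diff: "\<And>x y. Q x \<Longrightarrow> Q y \<Longrightarrow> x - y \<in> V"
    unfolding nhds_prod eventually_prod_same by auto
  from Q obtain U where "open U" "\<gamma> \<in> U" "\<forall>x\<in>U. Q x"
    unfolding eventually_nhds by blast
  with diff show ?thesis
    by (intro that) auto
qed

lemma open_nhd_avoiding_translates:
  fixes S :: "'a::topological_group_add set"
  assumes "closed S" "finite J" "\<And>j. j \<in> J \<Longrightarrow> - c j \<notin> S"
  obtains U where "open U" "\<gamma> \<in> U" "\<And>x y j. x \<in> U \<Longrightarrow> y \<in> U \<Longrightarrow> j \<in> J \<Longrightarrow> x - y - c j \<notin> S"
proof -
  define V where "V = (\<Inter>j\<in>J. - {v. v - c j \<in> S})"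
  have "closed {v. v - c j \<in> S}" for j
    using \<open>closed S\<close> by (rule closed_vimage[unfolded vimage_def]) (intro continuous_intros)
  then have "open V"
    unfolding V_def using \<open>finite J\<close> by (intro open_INT ballI open_Compl)
  moreover have "0 \<in> V"
    using assms(3) by (auto simp: V_def)
  ultimately obtain U where "open U" "\<gamma> \<in> U" "\<And>x y. x \<in> U \<Longrightarrow> y \<in> U \<Longrightarrow> x - y \<in> V"
    by (rule open_nhd_differences_subset[where \<gamma> = \<gamma>]) auto
  then show ?thesis
    using that unfolding V_def by blast
qed

theorem proposition5p30:
  fixes \<omega> :: "nat \<Rightarrow> 'a::{topological_ab_group_add, t2_space, second_countable_topology}"
    and n :: nat
  assumes "locally_compact_space (euclidean :: 'a topology)"
    and "n \<ge> 2"
    and "\<exists>K::nat. K > 0 \<and> (\<Sum>i<K. \<omega> 1) = 0"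
    and "\<forall>j\<in>{1..n}. j \<noteq> 1 \<longrightarrow> - \<omega> j \<notin> Omega_1 n \<omega>"
  shows "\<forall>\<gamma>::'a. \<exists>U. open U \<and> \<gamma> \<in> U \<and> (U - {\<gamma>}) \<inter> Omega_set n \<omega> = {}"
proof
  fix \<gamma> :: 'a
  have "1 \<le> n"
    using assms(2) by simp
  then have "\<omega> 1 \<in> Omega_1 n \<omega>"
    by (simp add: Omega_1_generator)
  obtain K where "K > 0" "scaleN K (\<omega> 1) = 0"
    using assms(3) unfolding scaleN_def by blast
  obtain U where "open U" "\<gamma> \<in> U"
    and separated: "\<And>x y j. x \<in> U \<Longrightarrow> y \<in> U \<Longrightarrow> j \<in> {1..n} - {1} \<Longrightarrow> x - y - \<omega> j \<notin> Omega_1 n \<omega>"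
    using open_nhd_avoiding_translates[OF closed_Omega_1[of n \<omega>], where J = "{1..n} - {1}" and c = \<omega>
        and \<gamma> = \<gamma>] assms(4) by auto
  have "finite (U \<inter> Omega_set n \<omega>)"
    by (rule finite_Omega_set_inter[where S = "Omega_1 n \<omega>" and n = n and \<omega> = \<omega>, OF zero_in_Omega_1[OF \<open>1 \<le> n\<close>]
          Omega_1_add Omega_1_generator \<open>\<omega> 1 \<in> Omega_1 n \<omega>\<close> uminus_first_in_Omega_1 separated
          \<open>K > 0\<close> \<open>scaleN K (\<omega> 1) = 0\<close>])
  then have "\<not> \<gamma> islimpt Omega_set n \<omega>"
    using \<open>open U\<close> \<open>\<gamma> \<in> U\<close> islimpt_eq_acc_point by blast
  then show "\<exists>U. open U \<and> \<gamma> \<in> U \<and> (U - {\<gamma>}) \<inter> Omega_set n \<omega> = {}"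
    unfolding islimpt_def by blast
qed

end
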